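(* Let $\Omega\subset H^2$ be a bounded open set, and let $f$ be a bounded function on $\Omega$ which is $C^\infty$ in $\Omega$, continuous on $\overline{\Omega}\setminus\{x=0\}$, satisfies $f_{xx}+f_{yy}+3x^{-1}f_x=0$ in $\Omega$, and satisfies $f=0$ on $\partial\Omega\setminus\{x=0\}$. Then $f\equiv 0$ on $\Omega$.
   Context: $H^2=\{(x,y)\in\mathbb{R}^2: x>0\}$ is the open right half-plane. *)

theory Defs
  imports "HOL-Analysis.Analysis"
begin

definition partial :: "bool \<Rightarrow> (real \<times> real \<Rightarrow> real) \<Rightarrow> real \<times> real \<Rightarrow> real" where
  "partial d f p = (if d then deriv (\<lambda>t. f (t, snd p)) (fst p)
                    else deriv (\<lambda>t. f (fst p, t)) (snd p))"

definition partial_differentiable :: "bool \<Rightarrow> (real \<times> real \<Rightarrow> real) \<Rightarrow> real \<times> real \<Rightarrow> bool" where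
  "partial_differentiable d f p = (if d then (\<lambda>t. f (t, snd p)) differentiable (at (fst p))
                    else (\<lambda>t. f (fst p, t)) differentiable (at (snd p)))"

text \<open>Iterated partial derivative along a list of directions (applied right to left).\<close>
fun iter_partial :: "bool list \<Rightarrow> (real \<times> real \<Rightarrow> real) \<Rightarrow> real \<times> real \<Rightarrow> real" where
  "iter_partial [] f = f"
| "iter_partial (d # ds) f = partial d (iter_partial ds f)"

definition smooth_on :: "(real \<times> real) set \<Rightarrow> (real \<times> real \<Rightarrow> real) \<Rightarrow> bool" where
  "smooth_on S f = (\<forall>ds. continuous_on S (iter_partial ds f) \<and>
                      (\<forall>d. \<forall>p\<in>S. partial_differentiable d (iter_partial ds f) p))"

end

theory Submission
  imports Defs "HOL-Real_Asymp.Real_Asymp"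
begin

text \<open>A maximum principle argument. If f were positive somewhere, consider
  w = f - \<epsilon>/x^2 + \<delta> y^2 with small \<epsilon>, \<delta> > 0. The term -\<epsilon>/x^2 is
  annihilated by L = d_xx + d_yy + (3/x) d_x and tends to -\<infinity> at the axis
  x = 0, so it keeps the maximum of w away from that part of the boundary, where
  nothing is known about f; the term \<delta> y^2 makes L w = 2\<delta> > 0. Hence w has no
  interior maximum, while on the rest of the boundary f = 0 forces w to be
  small. Applying this to f and -f gives f = 0.\<close>

lemma DERIV_local_max_second:
  fixes g g' :: "real \<Rightarrow> real"
  assumes "r > 0"
    and deriv: "\<forall>t\<in>ball a r. (g has_real_derivative g' t) (at t)"
    and deriv2: "(g' has_real_derivative g'') (at a)"
    and max: "\<forall>t\<in>ball a r. g t \<le> g a"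
  shows "g' a = 0 \<and> g'' \<le> 0"
proof
  show g'a: "g' a = 0"
    by (rule DERIV_local_max[of g "g' a" a r])
      (use assms in \<open>auto simp: dist_real_def\<close>)
  show "g'' \<le> 0"
  proof (rule ccontr)
    assume "\<not> g'' \<le> 0"
    from DERIV_pos_inc_right[OF deriv2] this obtain d where "d > 0"
      and inc: "\<And>h. 0 < h \<Longrightarrow> h < d \<Longrightarrow> g' a < g' (a + h)" by force
    define h where "h = min d r / 2"
    have h: "0 < h" "h < d" "h < r" using \<open>d > 0\<close> \<open>r > 0\<close> by (auto simp: h_def)
    obtain z where z: "a < z" "z < a + h" "g (a + h) - g a = h * g' z"
      using MVT2[of a "a + h" g g'] h deriv by (auto simp: dist_real_def)
    have "g' z > 0" using inc[of "z - a"] z h g'a by simp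
    with z h have "g (a + h) > g a" by (metis diff_gt_0_iff_gt mult_pos_pos)
    moreover have "a + h \<in> ball a r" using h by (simp add: dist_real_def)
    ultimately show False using max by force
  qed
qed

definition has_pure_second_partials_on ::
    "(real \<times> real) set \<Rightarrow> (real \<times> real \<Rightarrow> real) \<Rightarrow> (real \<times> real \<Rightarrow> real) \<Rightarrow>
     (real \<times> real \<Rightarrow> real) \<Rightarrow> (real \<times> real \<Rightarrow> real) \<Rightarrow> (real \<times> real \<Rightarrow> real) \<Rightarrow> bool" where
  "has_pure_second_partials_on S f fx fxx fy fyy \<longleftrightarrow> (\<forall>p\<in>S.
      ((\<lambda>t. f (t, snd p)) has_real_derivative fx p) (at (fst p)) \<and>
      ((\<lambda>t. fx (t, snd p)) has_real_derivative fxx p) (at (fst p)) \<and>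
      ((\<lambda>s. f (fst p, s)) has_real_derivative fy p) (at (snd p)) \<and>
      ((\<lambda>s. fy (fst p, s)) has_real_derivative fyy p) (at (snd p)))"

lemma smooth_on_imp_has_pure_second_partials_on:
  assumes "smooth_on S f"
  shows "has_pure_second_partials_on S f (partial True f) (iter_partial [True, True] f)
           (partial False f) (iter_partial [False, False] f)"
proof -
  have "partial_differentiable d (iter_partial ds f) p" if "p \<in> S" for d ds p
    using assms that by (auto simp: smooth_on_def)
  from this[of _ True "[]"] this[of _ True "[True]"] this[of _ False "[]"] this[of _ False "[False]"]
  show ?thesis
    by (simp add: has_pure_second_partials_on_def partial_def partial_differentiable_def
        DERIV_deriv_iff_real_differentiable)
qed

lemma has_pure_second_partials_on_minus:
  assumes "has_pure_second_partials_on S f fx fxx fy fyy"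
  shows "has_pure_second_partials_on S (\<lambda>p. - f p) (\<lambda>p. - fx p) (\<lambda>p. - fxx p)
           (\<lambda>p. - fy p) (\<lambda>p. - fyy p)"
  using assms by (auto simp: has_pure_second_partials_on_def intro: DERIV_minus)

definition barrier_perturbation ::
    "real \<Rightarrow> real \<Rightarrow> (real \<times> real \<Rightarrow> real) \<Rightarrow> real \<times> real \<Rightarrow> real" where
  "barrier_perturbation \<epsilon> \<delta> f p = f p - \<epsilon> / (fst p)\<^sup>2 + \<delta> * (snd p)\<^sup>2"

lemma has_pure_second_partials_on_barrier_perturbation:
  assumes "has_pure_second_partials_on S f fx fxx fy fyy" and "S \<subseteq> {p. fst p > 0}"
  shows "has_pure_second_partials_on S (barrier_perturbation \<epsilon> \<delta> f)
           (\<lambda>p. fx p + 2 * \<epsilon> / (fst p) ^ 3) (\<lambda>p. fxx p - 6 * \<epsilon> / (fst p) ^ 4)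
           (\<lambda>p. fy p + 2 * \<delta> * snd p) (\<lambda>p. fyy p + 2 * \<delta>)"
  unfolding has_pure_second_partials_on_def barrier_perturbation_def prod.sel
proof (intro ballI conjI)
  fix p assume "p \<in> S"
  then have "fst p \<noteq> 0" using assms(2) by force
  note f = assms(1)[unfolded has_pure_second_partials_on_def, rule_format, OF \<open>p \<in> S\<close>]
  show "((\<lambda>t. f (t, snd p) - \<epsilon> / t\<^sup>2 + \<delta> * (snd p)\<^sup>2)
          has_real_derivative fx p + 2 * \<epsilon> / (fst p) ^ 3) (at (fst p))"
    using f \<open>fst p \<noteq> 0\<close>
    by (auto intro!: derivative_eq_intros simp: field_simps power2_eq_square power3_eq_cube)
  show "((\<lambda>t. fx (t, snd p) + 2 * \<epsilon> / t ^ 3)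
          has_real_derivative fxx p - 6 * \<epsilon> / (fst p) ^ 4) (at (fst p))"
    using f \<open>fst p \<noteq> 0\<close> by (auto intro!: derivative_eq_intros simp: field_simps eval_nat_numeral)
  show "((\<lambda>s. f (fst p, s) - \<epsilon> / (fst p)\<^sup>2 + \<delta> * s\<^sup>2)
          has_real_derivative fy p + 2 * \<delta> * snd p) (at (snd p))"
    using f by (auto intro!: derivative_eq_intros simp: field_simps power2_eq_square)
  show "((\<lambda>s. fy (fst p, s) + 2 * \<delta> * s)
          has_real_derivative fyy p + 2 * \<delta>) (at (snd p))"
    using f by (auto intro!: derivative_eq_intros)
qed

lemma local_max_pure_second_partials:
  assumes "has_pure_second_partials_on (ball q r) w wx wxx wy wyy" and "r > 0"
    and max: "\<forall>p\<in>ball q r. w p \<le> w q"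
  shows "wx q = 0 \<and> wxx q \<le> 0 \<and> wyy q \<le> 0"
proof -
  obtain a b where q: "q = (a, b)" by force
  have horiz: "(t, b) \<in> ball q r" if "t \<in> ball a r" for t
    using that by (simp add: q dist_Pair_Pair dist_real_def)
  have vert: "(a, s) \<in> ball q r" if "s \<in> ball b r" for s
    using that by (simp add: q dist_Pair_Pair dist_real_def)
  note w = assms(1)[unfolded has_pure_second_partials_on_def, rule_format]
  have "wx q = 0 \<and> wxx q \<le> 0"
    using DERIV_local_max_second[of r a "\<lambda>t. w (t, b)" "\<lambda>t. wx (t, b)" "wxx q"]
      w[OF horiz] w[of q] max horiz \<open>r > 0\<close> by (auto simp: q)
  moreover have "wyy q \<le> 0"
    using DERIV_local_max_second[of r b "\<lambda>s. w (a, s)" "\<lambda>s. wy (a, s)" "wyy q"]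
      w[OF vert] w[of q] max vert \<open>r > 0\<close> by (auto simp: q)
  ultimately show ?thesis by simp
qed

lemma barrier_perturbation_no_local_max:
  assumes partials: "has_pure_second_partials_on S f fx fxx fy fyy"
    and pos: "S \<subseteq> {p. fst p > 0}"
    and pde: "\<forall>p\<in>S. fxx p + fyy p + 3 / fst p * fx p = 0"
    and "\<delta> > 0" and "r > 0" and "ball q r \<subseteq> S"
    and max: "\<forall>p\<in>ball q r. barrier_perturbation \<epsilon> \<delta> f p \<le> barrier_perturbation \<epsilon> \<delta> f q"
  shows False
proof -
  have "has_pure_second_partials_on (ball q r) (barrier_perturbation \<epsilon> \<delta> f)
           (\<lambda>p. fx p + 2 * \<epsilon> / (fst p) ^ 3) (\<lambda>p. fxx p - 6 * \<epsilon> / (fst p) ^ 4)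
           (\<lambda>p. fy p + 2 * \<delta> * snd p) (\<lambda>p. fyy p + 2 * \<delta>)"
    using has_pure_second_partials_on_barrier_perturbation[OF partials pos] \<open>ball q r \<subseteq> S\<close>
    by (auto simp: has_pure_second_partials_on_def)
  from local_max_pure_second_partials[OF this \<open>r > 0\<close> max]
  have fx: "fx q = - 2 * \<epsilon> / (fst q) ^ 3" and "fxx q - 6 * \<epsilon> / (fst q) ^ 4 \<le> 0"
    and "fyy q + 2 * \<delta> \<le> 0" by auto
  moreover have "q \<in> S" using \<open>ball q r \<subseteq> S\<close> \<open>r > 0\<close> by auto
  then have "fst q > 0" using pos by auto
  then have "3 / fst q * fx q = - 6 * \<epsilon> / (fst q) ^ 4"
    unfolding fx by (simp add: field_simps eval_nat_numeral)
  moreover have "fxx q + fyy q + 3 / fst q * fx q = 0" using pde \<open>q \<in> S\<close> by blast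
  ultimately show False using \<open>\<delta> > 0\<close> by linarith
qed

lemma barrier_perturbation_max_on_truncated_boundary:
  fixes \<Omega> :: "(real \<times> real) set"
  assumes "open \<Omega>" and "bounded \<Omega>" and pos: "\<Omega> \<subseteq> {p. fst p > 0}"
    and cont: "continuous_on (closure \<Omega> - {p. fst p = 0}) f"
    and partials: "has_pure_second_partials_on \<Omega> f fx fxx fy fyy"
    and pde: "\<forall>p\<in>\<Omega>. fxx p + fyy p + 3 / fst p * fx p = 0"
    and "\<delta> > 0" and "\<eta> > 0" and "p0 \<in> \<Omega>" and "fst p0 \<ge> \<eta>"
  obtains q where "q \<in> closure \<Omega>" and "fst q \<ge> \<eta>" and "q \<notin> \<Omega> \<or> fst q = \<eta>"
    and "barrier_perturbation \<epsilon> \<delta> f p0 \<le> barrier_perturbation \<epsilon> \<delta> f q"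
proof -
  define w where "w = barrier_perturbation \<epsilon> \<delta> f"
  define K where "K = closure \<Omega> \<inter> {p. fst p \<ge> \<eta>}"
  have "compact K"
    unfolding K_def using \<open>bounded \<Omega>\<close>
    by (intro compact_Int_closed closed_Collect_le continuous_intros) (simp add: compact_closure)
  moreover have "continuous_on K w"
    unfolding w_def barrier_perturbation_def using \<open>\<eta> > 0\<close>
    by (intro continuous_intros continuous_on_subset[OF cont]) (auto simp: K_def)
  moreover have "p0 \<in> K"
    using \<open>p0 \<in> \<Omega>\<close> \<open>fst p0 \<ge> \<eta>\<close> closure_subset by (auto simp: K_def)
  ultimately obtain q where "q \<in> K" and q_max: "\<forall>p\<in>K. w p \<le> w q"
    using continuous_attains_sup by blast
  have "q \<notin> \<Omega> \<or> fst q = \<eta>"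
  proof (rule ccontr)
    assume "\<not> (q \<notin> \<Omega> \<or> fst q = \<eta>)"
    then have "q \<in> \<Omega> \<inter> {p. fst p > \<eta>}" using \<open>q \<in> K\<close> by (auto simp: K_def)
    moreover have "open (\<Omega> \<inter> {p. fst p > \<eta>})"
      using \<open>open \<Omega>\<close> by (intro open_Int open_Collect_less continuous_intros)
    ultimately obtain r where "r > 0" and r: "ball q r \<subseteq> \<Omega> \<inter> {p. fst p > \<eta>}"
      by (force simp: open_contains_ball)
    then have "ball q r \<subseteq> K" using closure_subset by (force simp: K_def)
    then have "\<forall>p\<in>ball q r. w p \<le> w q" using q_max by blast
    then show False
      using barrier_perturbation_no_local_max[OF partials pos pde \<open>\<delta> > 0\<close> \<open>r > 0\<close>] r
      unfolding w_def by blast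
  qed
  moreover have "q \<in> closure \<Omega>" "fst q \<ge> \<eta>" using \<open>q \<in> K\<close> by (auto simp: K_def)
  moreover have "w p0 \<le> w q" using q_max \<open>p0 \<in> K\<close> by blast
  ultimately show thesis using that unfolding w_def by blast
qed

lemma exists_small_with_large_inverse_square:
  fixes \<epsilon> x C :: real
  assumes "\<epsilon> > 0" and "x > 0"
  shows "\<exists>\<eta>>0. \<eta> < x \<and> C < \<epsilon> / \<eta>\<^sup>2"
proof -
  have "eventually (\<lambda>\<eta>. \<eta> > 0 \<and> \<eta> < x \<and> C < \<epsilon> / \<eta>\<^sup>2) (at_right 0)"
    using assms by (intro eventually_conj eventually_at_right_less; real_asymp)
  then show ?thesis by (metis (mono_tags, lifting) eventually_happens trivial_limit_at_right_real)
qed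

lemma bounded_imp_snd_square_bounded:
  fixes S :: "('a::real_normed_vector \<times> real) set"
  assumes "bounded S"
  obtains M where "M \<ge> 0" and "\<And>p. p \<in> S \<Longrightarrow> (snd p)\<^sup>2 \<le> M"
proof -
  obtain R where R: "\<And>p. p \<in> S \<Longrightarrow> norm p \<le> R" using assms by (auto simp: bounded_iff)
  have "(snd p)\<^sup>2 \<le> R\<^sup>2" if "p \<in> S" for p
  proof -
    have "\<bar>snd p\<bar> \<le> R" using R[OF that] norm_snd_le[of "snd p" "fst p"] by simp
    then show ?thesis using power_mono[OF _ abs_ge_zero, of "snd p" R 2] by simp
  qed
  then show thesis using that[of "R\<^sup>2"] by simp
qed

lemma solution_le_zero:
  fixes \<Omega> :: "(real \<times> real) set" and f :: "real \<times> real \<Rightarrow> real"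
  assumes "open \<Omega>" and "bounded \<Omega>" and pos: "\<Omega> \<subseteq> {p. fst p > 0}"
    and bound: "\<forall>p\<in>\<Omega>. f p \<le> B"
    and cont: "continuous_on (closure \<Omega> - {p. fst p = 0}) f"
    and partials: "has_pure_second_partials_on \<Omega> f fx fxx fy fyy"
    and pde: "\<forall>p\<in>\<Omega>. fxx p + fyy p + 3 / fst p * fx p = 0"
    and boundary: "\<forall>p\<in>frontier \<Omega>. fst p \<noteq> 0 \<longrightarrow> f p = 0"
    and "p0 \<in> \<Omega>"
  shows "f p0 \<le> 0"
proof (rule ccontr)
  define v x0 where "v = f p0" and "x0 = fst p0"
  assume "\<not> f p0 \<le> 0"
  then have "v > 0" by (simp add: v_def)
  have "x0 > 0" using pos \<open>p0 \<in> \<Omega>\<close> by (auto simp: x0_def)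
  obtain M where "M \<ge> 0" and M: "\<And>p. p \<in> closure \<Omega> \<Longrightarrow> (snd p)\<^sup>2 \<le> M"
    using bounded_imp_snd_square_bounded bounded_closure[OF \<open>bounded \<Omega>\<close>] by blast
  define \<epsilon> \<delta> where "\<epsilon> = v * x0\<^sup>2 / 4" and "\<delta> = v / (4 * (M + 1))"
  have "\<epsilon> > 0" "\<delta> > 0" using \<open>v > 0\<close> \<open>x0 > 0\<close> \<open>M \<ge> 0\<close> by (simp_all add: \<epsilon>_def \<delta>_def)
  have "\<delta> * M < v / 4"
    using \<open>v > 0\<close> \<open>M \<ge> 0\<close> by (simp add: \<delta>_def field_simps)
  obtain \<eta> where "\<eta> > 0" "\<eta> < x0" and \<eta>: "B + \<delta> * M < \<epsilon> / \<eta>\<^sup>2"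
    using exists_small_with_large_inverse_square[OF \<open>\<epsilon> > 0\<close> \<open>x0 > 0\<close>] by blast
  define w where "w = barrier_perturbation \<epsilon> \<delta> f"
  have "fst p0 \<ge> \<eta>" using \<open>\<eta> < x0\<close> by (simp add: x0_def)
  then obtain q where q: "q \<in> closure \<Omega>" "fst q \<ge> \<eta>" "q \<notin> \<Omega> \<or> fst q = \<eta>"
    and "w p0 \<le> w q"
    using barrier_perturbation_max_on_truncated_boundary[OF assms(1-3) cont partials pde
        \<open>\<delta> > 0\<close> \<open>\<eta> > 0\<close> \<open>p0 \<in> \<Omega>\<close>, where \<epsilon> = \<epsilon>]
    unfolding w_def by blast
  moreover have "w p0 \<ge> 3 * v / 4"
    using \<open>x0 > 0\<close> \<open>\<delta> > 0\<close> by (simp add: w_def barrier_perturbation_def v_def \<epsilon>_def x0_def)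
  ultimately have w_q: "w q \<ge> 3 * v / 4" by simp
  have y_q: "\<delta> * (snd q)\<^sup>2 \<le> \<delta> * M" using M[OF q(1)] \<open>\<delta> > 0\<close> by simp
  show False
  proof (cases "q \<in> \<Omega>")
    case False
    then have "f q = 0"
      using q boundary \<open>\<eta> > 0\<close> \<open>open \<Omega>\<close> by (auto simp: frontier_def interior_open)
    moreover have "\<epsilon> / (fst q)\<^sup>2 \<ge> 0" using \<open>\<epsilon> > 0\<close> by simp
    ultimately have "w q \<le> \<delta> * M" using y_q by (simp add: w_def barrier_perturbation_def)
    then show False using w_q \<open>\<delta> * M < v / 4\<close> \<open>v > 0\<close> by simp
  next
    case True
    then have "fst q = \<eta>" and "f q \<le> B" using q(3) bound by auto
    then have "w q \<le> B - \<epsilon> / \<eta>\<^sup>2 + \<delta> * M"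
      using y_q unfolding w_def barrier_perturbation_def by simp
    then show False using \<eta> w_q \<open>v > 0\<close> by simp
  qed
qed

theorem proposition4p2:
  fixes \<Omega> :: "(real \<times> real) set" and f :: "real \<times> real \<Rightarrow> real"
  assumes "open \<Omega>" and "bounded \<Omega>" and "\<Omega> \<subseteq> {p. fst p > 0}"
    and "bounded (f ` \<Omega>)"
    and "smooth_on \<Omega> f"
    and "continuous_on (closure \<Omega> - {p. fst p = 0}) f"
    and "\<forall>p\<in>\<Omega>. iter_partial [True, True] f p + iter_partial [False, False] f p
                 + 3 / fst p * partial True f p = 0"
    and "\<forall>p\<in>frontier \<Omega>. fst p \<noteq> 0 \<longrightarrow> f p = 0"
  shows "\<forall>p\<in>\<Omega>. f p = 0"
proof
  fix p assume "p \<in> \<Omega>"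
  obtain B where B: "\<forall>p\<in>\<Omega>. \<bar>f p\<bar> \<le> B" using assms(4) by (auto simp: bounded_iff)
  note partials = smooth_on_imp_has_pure_second_partials_on[OF assms(5)]
  have "\<forall>p\<in>\<Omega>. f p \<le> B" and "\<forall>p\<in>\<Omega>. - f p \<le> B" using B by force+
  then have "f p \<le> 0"
    using solution_le_zero[OF assms(1-3) _ assms(6) partials assms(7,8) \<open>p \<in> \<Omega>\<close>] by blast
  moreover have "- f p \<le> 0"
  proof (rule solution_le_zero[OF assms(1-3) \<open>\<forall>p\<in>\<Omega>. - f p \<le> B\<close> _
        has_pure_second_partials_on_minus[OF partials]])
    show "continuous_on (closure \<Omega> - {p. fst p = 0}) (\<lambda>p. - f p)"
      using assms(6) by (rule continuous_on_minus)
  qed (use assms(7,8) \<open>p \<in> \<Omega>\<close> in \<open>auto simp: algebra_simps\<close>)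
  ultimately show "f p = 0" by simp
qed

end
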